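(* Let $X,Y$ be real Hilbert spaces and $a:X\times Y\to\mathbb{R}\cup\{+\infty\}$ such that for every $y\in Y$ the function $a(\cdot,y)$ is proper and $\Phi_{lsc}$-convex on $X$, and for every $x\in X$ the function $a(x,\cdot)$ is concave on $Y$. Assume $\beta:=\inf_{x\in X}\sup_{y\in Y}a(x,y)<+\infty$. If there exist $y_1,y_2\in Y$ and $\bar x\in\mathrm{dom}\,a(\cdot,y_1)\cap\mathrm{dom}\,a(\cdot,y_2)$ with $a(\bar x,y_1)\ge\beta$ and $a(\bar x,y_2)\ge\beta$ such that $a(\cdot,y_1)$ and $a(\cdot,y_2)$ satisfy $ZS(0,\bar x)$, then $\sup_{y\in Y}\inf_{x\in X}a(x,y)=\inf_{x\in X}\sup_{y\in Y}a(x,y)$.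
   Context: $\Phi_{lsc}$ is the class of functions $\varphi(x)=-a\|x\|^2+\langle v,x\rangle+c$ ($a\ge0$, $v\in X^*$, $c\in\mathbb{R}$); $\mathrm{supp}(f)=\{\varphi\in\Phi_{lsc}:\varphi\le f\}$; $f$ is $\Phi_{lsc}$-convex if $f=\sup\mathrm{supp}(f)$ pointwise; proper means $\mathrm{supp}(f)\ne\emptyset$ and $\mathrm{dom}(f)\ne\emptyset$. $\partial_{lsc}f(\bar x)$ is the set of $(a,v)\in\mathbb{R}_+\times X^*$ with $f(x)-f(\bar x)\ge\langle v,x-\bar x\rangle-a\|x\|^2+a\|\bar x\|^2$ for all $x\in X$. Functions $f,g$ satisfy $ZS(0,\bar x)$ if $0=(0,0)\in\mathrm{co}(\partial_{lsc}f(\bar x)\cup\partial_{lsc}g(\bar x))$, convex hull in $\mathbb{R}\times X^*$. *)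

theory Defs
  imports "HOL-Analysis.Analysis"
begin

text \<open>Real Hilbert spaces are rendered as types of class real_inner and complete_space;
  the dual X* is identified with X via the Riesz representation, so a continuous
  linear functional v is applied as the inner product v \<bullet> x.
  Functions with values in the reals extended by +infinity are ereal-valued functions
  that never take the value -infinity.\<close>

definition phi_lsc :: "real \<Rightarrow> 'a::real_inner \<Rightarrow> real \<Rightarrow> 'a \<Rightarrow> real" where
  "phi_lsc a v c x = - a * (norm x)\<^sup>2 + inner v x + c"

text \<open>The elementary function phi_lsc a v c is identified with its parameters (a,v,c), a \<ge> 0.\<close>
definition supp_lsc :: "('a::real_inner \<Rightarrow> ereal) \<Rightarrow> (real \<times> 'a \<times> real) set" where
  "supp_lsc f = {(a, v, c). a \<ge> 0 \<and> (\<forall>x. ereal (phi_lsc a v c x) \<le> f x)}"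

definition Phi_lsc_convex :: "('a::real_inner \<Rightarrow> ereal) \<Rightarrow> bool" where
  "Phi_lsc_convex f \<longleftrightarrow> (\<forall>x. f x = (SUP p\<in>supp_lsc f. ereal (phi_lsc (fst p) (fst (snd p)) (snd (snd p)) x)))"

definition edom :: "('a \<Rightarrow> ereal) \<Rightarrow> 'a set" where
  "edom f = {x. f x < \<infinity>}"

definition proper_lsc :: "('a::real_inner \<Rightarrow> ereal) \<Rightarrow> bool" where
  "proper_lsc f \<longleftrightarrow> supp_lsc f \<noteq> {} \<and> edom f \<noteq> {}"

text \<open>The inequality f x - f xbar \<ge> ... is written additively, f x \<ge> f xbar + ...
  (equivalent whenever f xbar is finite, which is the relevant case).\<close>
definition subdiff_lsc :: "('a::real_inner \<Rightarrow> ereal) \<Rightarrow> 'a \<Rightarrow> (real \<times> 'a) set" where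
  "subdiff_lsc f xbar = {(a, v). a \<ge> 0 \<and>
     (\<forall>x. f x \<ge> f xbar + ereal (inner v (x - xbar) - a * (norm x)\<^sup>2 + a * (norm xbar)\<^sup>2))}"

definition ZS0 :: "('a::real_inner \<Rightarrow> ereal) \<Rightarrow> ('a \<Rightarrow> ereal) \<Rightarrow> 'a \<Rightarrow> bool" where
  "ZS0 f g xbar \<longleftrightarrow> (0::real \<times> 'a) \<in> convex hull (subdiff_lsc f xbar \<union> subdiff_lsc g xbar)"

definition concave_ereal :: "('b::real_vector \<Rightarrow> ereal) \<Rightarrow> bool" where
  "concave_ereal g \<longleftrightarrow> (\<forall>y1 y2 t. 0 < t \<and> t < 1 \<longrightarrow>
      ereal t * g y1 + ereal (1 - t) * g y2 \<le> g (t *\<^sub>R y1 + (1 - t) *\<^sub>R y2))"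

end

theory Submission
  imports Defs
begin

text \<open>A subgradient (a, v) of f at xbar says that f stays above f xbar plus the quadratic
  lsc_minorant, which is linear in (a, v). A convex combination of subgradients of
  f = a(\<cdot>,y1) and g = a(\<cdot>,y2) that vanishes therefore shows that xbar minimises
  l f + (1 - l) g, with value at least min (f xbar) (g xbar) \<ge> \<beta>. Concavity in y moves
  this bound to the single point y = l y1 + (1 - l) y2, so inf_x a(x, y) \<ge> \<beta>; the reverse
  inequality is weak duality.\<close>

lemma convex_hull_Un_convexE:
  fixes S T :: "'a::real_vector set"
  assumes "x \<in> convex hull (S \<union> T)" "convex S" "S \<noteq> {}" "convex T" "T \<noteq> {}"
  obtains u s t where "0 \<le> u" "u \<le> 1" "s \<in> S" "t \<in> T" "x = u *\<^sub>R s + (1 - u) *\<^sub>R t"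
proof -
  have "S \<union> T = \<Union> ((\<lambda>b. if b then S else T) ` UNIV)" by auto
  then have "x \<in> convex hull (\<Union> ((\<lambda>b. if b then S else T) ` UNIV))" using assms(1) by simp
  then obtain c s where c: "\<forall>i. c i \<ge> 0" "sum c UNIV = 1"
      and s: "\<forall>i. s i \<in> (if i then S else T)" and x: "x = sum (\<lambda>i. c i *\<^sub>R s i) UNIV"
    by (subst (asm) convex_hull_finite_union) (use assms in auto)
  have "c True \<le> 1" "c False = 1 - c True"
    using c(1)[rule_format, of False] c(2) by (simp_all add: UNIV_bool)
  moreover have "s True \<in> S" "s False \<in> T" using s by (metis (full_types))+
  ultimately show thesis
    using c x by (intro that[of "c True" "s True" "s False"]) (auto simp: UNIV_bool)
qed

definition lsc_minorant :: "'a::real_inner \<Rightarrow> 'a \<Rightarrow> real \<times> 'a \<Rightarrow> real" where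
  "lsc_minorant xbar x p = inner (snd p) (x - xbar) - fst p * (norm x)\<^sup>2 + fst p * (norm xbar)\<^sup>2"

lemma lsc_minorant_combination:
  "lsc_minorant xbar x (u *\<^sub>R p + v *\<^sub>R q) = u * lsc_minorant xbar x p + v * lsc_minorant xbar x q"
  by (simp add: lsc_minorant_def algebra_simps)

lemma lsc_minorant_zero [simp]: "lsc_minorant xbar x 0 = 0"
  by (simp add: lsc_minorant_def)

lemma subdiff_lsc_iff:
  "p \<in> subdiff_lsc f xbar \<longleftrightarrow> 0 \<le> fst p \<and> (\<forall>x. f xbar + ereal (lsc_minorant xbar x p) \<le> f x)"
  by (cases p) (simp add: subdiff_lsc_def lsc_minorant_def)

lemma convex_subdiff_lsc: "convex (subdiff_lsc f xbar)"
proof (rule convexI)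
  fix p q :: "real \<times> 'a" and u v :: real
  assume p: "p \<in> subdiff_lsc f xbar" and q: "q \<in> subdiff_lsc f xbar"
    and uv: "0 \<le> u" "0 \<le> v" "u + v = 1"
  have "f xbar + ereal (lsc_minorant xbar x (u *\<^sub>R p + v *\<^sub>R q)) \<le> f x" for x
  proof -
    have "lsc_minorant xbar x (u *\<^sub>R p + v *\<^sub>R q) \<le> max (lsc_minorant xbar x p) (lsc_minorant xbar x q)"
      unfolding lsc_minorant_combination using uv by (intro convex_bound_le) auto
    then have "f xbar + ereal (lsc_minorant xbar x (u *\<^sub>R p + v *\<^sub>R q))
        \<le> f xbar + ereal (max (lsc_minorant xbar x p) (lsc_minorant xbar x q))"
      by (intro add_left_mono) (simp only: ereal_less_eq(3))
    also have "\<dots> \<le> f x"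
      using p q by (simp add: subdiff_lsc_iff max_def)
    finally show ?thesis .
  qed
  then show "u *\<^sub>R p + v *\<^sub>R q \<in> subdiff_lsc f xbar"
    using p q uv by (auto simp: subdiff_lsc_iff)
qed

lemma subdiff_lsc_zero_imp_minimum:
  assumes "0 \<in> subdiff_lsc f xbar" shows "f xbar \<le> f x"
  using assms by (auto simp: subdiff_lsc_iff zero_ereal_def[symmetric])

lemma subdiff_lsc_combination_zero_imp_minimum:
  assumes p: "p \<in> subdiff_lsc f xbar" and q: "q \<in> subdiff_lsc g xbar"
    and l: "0 \<le> l" "l \<le> 1" and zero: "l *\<^sub>R p + (1 - l) *\<^sub>R q = 0"
    and fin: "f xbar = ereal c" "g xbar = ereal d"
  shows "ereal (l * c + (1 - l) * d) \<le> ereal l * f x + ereal (1 - l) * g x"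
proof -
  let ?L = "lsc_minorant xbar x"
  have "l * ?L p + (1 - l) * ?L q = 0"
    using zero by (metis lsc_minorant_combination lsc_minorant_zero)
  then have "ereal (l * c + (1 - l) * d) = ereal l * ereal (c + ?L p) + ereal (1 - l) * ereal (d + ?L q)"
    by (simp add: distrib_left)
  also have "\<dots> \<le> ereal l * f x + ereal (1 - l) * g x"
  proof (intro add_mono ereal_mult_left_mono)
    show "ereal (c + ?L p) \<le> f x" "ereal (d + ?L q) \<le> g x"
      using p q fin by (simp_all add: subdiff_lsc_iff)
  qed (use l in simp_all)
  finally show ?thesis .
qed

lemma ZS0_imp_weighted_minimum:
  assumes "ZS0 f g xbar" "f xbar = ereal c" "g xbar = ereal d"
  obtains l where "0 \<le> l" "l \<le> 1"
    "\<And>x. ereal (l * c + (1 - l) * d) \<le> ereal l * f x + ereal (1 - l) * g x"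
proof (cases "subdiff_lsc f xbar = {} \<or> subdiff_lsc g xbar = {}")
  case True
  then show thesis
  proof
    assume "subdiff_lsc f xbar = {}"
    then have "0 \<in> subdiff_lsc g xbar"
      using assms(1) by (metis ZS0_def convex_hull_eq convex_subdiff_lsc sup_bot_left)
    then show thesis
      using assms(3) subdiff_lsc_zero_imp_minimum[of g xbar]
      by (intro that[of 0]) (auto simp: zero_ereal_def[symmetric])
  next
    assume "subdiff_lsc g xbar = {}"
    then have "0 \<in> subdiff_lsc f xbar"
      using assms(1) by (metis ZS0_def convex_hull_eq convex_subdiff_lsc sup_bot_right)
    then show thesis
      using assms(2) subdiff_lsc_zero_imp_minimum[of f xbar]
      by (intro that[of 1]) (auto simp: zero_ereal_def[symmetric] one_ereal_def[symmetric])
  qed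
next
  case False
  have "0 \<in> convex hull (subdiff_lsc f xbar \<union> subdiff_lsc g xbar)"
    using assms(1) unfolding ZS0_def .
  then obtain l p q where "0 \<le> l" "l \<le> 1" "p \<in> subdiff_lsc f xbar" "q \<in> subdiff_lsc g xbar"
      "0 = l *\<^sub>R p + (1 - l) *\<^sub>R q"
    by (rule convex_hull_Un_convexE) (use False convex_subdiff_lsc in blast)+
  then show thesis
    using assms(2,3) by (intro that[of l] subdiff_lsc_combination_zero_imp_minimum) auto
qed

lemma concave_erealD:
  assumes "concave_ereal g" "0 \<le> t" "t \<le> 1"
  shows "ereal t * g y1 + ereal (1 - t) * g y2 \<le> g (t *\<^sub>R y1 + (1 - t) *\<^sub>R y2)"
  using assms by (cases "t = 0 \<or> t = 1") (auto simp: concave_ereal_def zero_ereal_def[symmetric])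

lemma SUP_INF_le_INF_SUP:
  fixes a :: "'a \<Rightarrow> 'b \<Rightarrow> 'c::complete_lattice"
  shows "(SUP y. INF x. a x y) \<le> (INF x. SUP y. a x y)"
  by (intro SUP_least INF_greatest) (metis INF_lower SUP_upper UNIV_I order_trans)

theorem mainTheorem14:
  fixes a :: "'x::{real_inner, complete_space} \<Rightarrow> 'y::{real_inner, complete_space} \<Rightarrow> ereal"
  assumes no_minf: "\<And>x y. a x y \<noteq> -\<infinity>"
    and proper: "\<And>y. proper_lsc (\<lambda>x. a x y)"
    and convex: "\<And>y. Phi_lsc_convex (\<lambda>x. a x y)"
    and concave: "\<And>x. concave_ereal (\<lambda>y. a x y)"
    and beta_fin: "(INF x. SUP y. a x y) < \<infinity>"
    and xbar_dom: "xbar \<in> edom (\<lambda>x. a x y1) \<inter> edom (\<lambda>x. a x y2)"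
    and ge1: "a xbar y1 \<ge> (INF x. SUP y. a x y)"
    and ge2: "a xbar y2 \<ge> (INF x. SUP y. a x y)"
    and zs: "ZS0 (\<lambda>x. a x y1) (\<lambda>x. a x y2) xbar"
  shows "(SUP y. INF x. a x y) = (INF x. SUP y. a x y)"
proof -
  define \<beta> where "\<beta> = (INF x. SUP y. a x y)"
  obtain c1 c2 where c: "a xbar y1 = ereal c1" "a xbar y2 = ereal c2"
    using xbar_dom no_minf by (simp add: edom_def) (metis real_of_ereal.elims)
  obtain l where l: "0 \<le> l" "l \<le> 1"
    and weighted: "\<And>x. ereal (l * c1 + (1 - l) * c2) \<le> ereal l * a x y1 + ereal (1 - l) * a x y2"
    using ZS0_imp_weighted_minimum[OF zs c] by blast
  have "\<beta> \<le> ereal (min c1 c2)"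
    using ge1 ge2 c by (simp add: \<beta>_def min_def)
  also have "\<dots> \<le> ereal (l * c1 + (1 - l) * c2)"
    unfolding ereal_less_eq(3)
    using mult_left_mono[of "min c1 c2" c1 l] mult_left_mono[of "min c1 c2" c2 "1 - l"] l
    by (simp add: algebra_simps)
  also have "\<dots> \<le> a x (l *\<^sub>R y1 + (1 - l) *\<^sub>R y2)" for x
    using weighted concave_erealD[OF concave l] by (rule order_trans)
  finally have "\<beta> \<le> (INF x. a x (l *\<^sub>R y1 + (1 - l) *\<^sub>R y2))"
    by (rule INF_greatest)
  also have "\<dots> \<le> (SUP y. INF x. a x y)"
    by (rule SUP_upper) simp
  finally show ?thesis
    using SUP_INF_le_INF_SUP[of a] by (simp add: \<beta>_def antisym)
qed

end
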